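(* For distinct $a,b$, in $A(\mathcal{H}^+)$: $[E^u_{ba}]=[\bar E^u_{ba}]$, $[E^t_{ba}]=[\bar E^t_{ba}]$ and $[\Lambda_{ab}]=[\Lambda_{ba}]$.
   Context: $\mathfrak{h}$ is an $\ell$-dimensional complex space with orthonormal basis $h_1,\dots,h_\ell$; $\mathcal{H}=M(1,0)$ the free bosonic vertex operator algebra generated by Heisenberg modes $h(n)$ on vacuum $\mathbf{1}$; $\mathcal{H}^+$ the fixed points of the automorphism induced by $h\mapsto-h$; $A(\mathcal{H}^+)=\mathcal{H}^+/O(\mathcal{H}^+)$ Zhu's algebra ($O$ spanned by $u\circ v=\sum_{i\ge0}\binom{\mathrm{wt}\,u}{i}u_{i-2}v$, product induced by $u*v=\sum_{i\ge0}\binom{\mathrm{wt}\,u}{i}u_{i-1}v$), $[u]=u+O(\mathcal{H}^+)$. For distinct $a,b$ and $m\ge1$ let $S_{ab}(1,m)=h_a(-1)h_b(-m)\mathbf{1}$ and define $E^u_{ab}=5S_{ab}(1,2)+25S_{ab}(1,3)+36S_{ab}(1,4)+16S_{ab}(1,5)$, $\bar E^u_{ba}=S_{ab}(1,1)+14S_{ab}(1,2)+41S_{ab}(1,3)+44S_{ab}(1,4)+16S_{ab}(1,5)$, $E^t_{ab}=-16\big(3S_{ab}(1,2)+14S_{ab}(1,3)+19S_{ab}(1,4)+8S_{ab}(1,5)\big)$, $\bar E^t_{ba}=-16\big(5S_{ab}(1,2)+18S_{ab}(1,3)+21S_{ab}(1,4)+8S_{ab}(1,5)\big)$, $\Lambda_{ab}=45S_{ab}(1,2)+190S_{ab}(1,3)+240S_{ab}(1,4)+96S_{ab}(1,5)$;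 so $E^u_{ba}$, $E^t_{ba}$, $\Lambda_{ba}$ are given by the same formulas with $a$ and $b$ interchanged. *)

theory Defs
  imports Complex_Main "HOL-Library.Multiset" "HOL-Library.Product_Lexorder"
begin

text \<open>
  Model of the free bosonic VOA M(1,0) on an ell-dimensional space h with orthonormal
  basis h_1..h_ell.  M(1,0) = C[h_a(-n) : 1 <= a <= ell, n >= 1] (Fock space).
  A PBW monomial h_{a1}(-n1)...h_{ak}(-nk) 1 is the multiset of pairs (a_i, n_i).
  Vectors are complex-valued coefficient functions on monomials (with finite support).
\<close>

type_synonym mon = "(nat \<times> nat) multiset"
type_synonym vec = "mon \<Rightarrow> complex"

definition mon_ok :: "nat \<Rightarrow> mon \<Rightarrow> bool" where
  "mon_ok ell w \<longleftrightarrow> (\<forall>p\<in>#w. 1 \<le> fst p \<and> fst p \<le> ell \<and> 1 \<le> snd p)"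

definition wt :: "mon \<Rightarrow> nat" where
  "wt w = sum_mset (image_mset snd w)"

definition basis :: "mon \<Rightarrow> vec" where
  "basis w = (\<lambda>w'. if w' = w then 1 else 0)"

definition vsupp :: "vec \<Rightarrow> mon set" where
  "vsupp x = {w. x w \<noteq> 0}"

definition lin :: "(mon \<Rightarrow> vec) \<Rightarrow> vec \<Rightarrow> vec" where
  "lin f x = (\<lambda>w'. \<Sum>w\<in>vsupp x. x w * f w w')"

text \<open>Heisenberg operator h_a(m) on basis monomials:
  creation (m<0) multiplies by h_a(m); annihilation (m>0) acts as m * d/d h_a(-m)
  ([h_a(m),h_b(n)] = m delta_ab delta_{m+n,0}); h_a(0) = 0 on M(1,0).\<close>
definition heis_b :: "nat \<Rightarrow> int \<Rightarrow> mon \<Rightarrow> vec" where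
  "heis_b a m w =
     (if m < 0 then basis (add_mset (a, nat (- m)) w)
      else if m = 0 then (\<lambda>_. 0)
      else (\<lambda>w'. of_int m * of_nat (count w (a, nat m)) * basis (w - {#(a, nat m)#}) w'))"

definition heis :: "nat \<Rightarrow> int \<Rightarrow> vec \<Rightarrow> vec" where
  "heis a m = lin (heis_b a m)"

text \<open>Coefficient of h(m) z^{-m-n} in the field d^{(n-1)} h(z) / (n-1)!.\<close>
definition cf :: "nat \<Rightarrow> int \<Rightarrow> complex" where
  "cf n m = (of_int (- m - 1) :: complex) gchoose (n - 1)"

text \<open>Modes of vertex operators: Y(1,z) = id and
  Y(h_a(-n) v, z) = : d^{(n-1)} h_a(z) Y(v,z) : (normal ordered), i.e.
  (h_a(-n)v)_j = sum_{m<0} cf n m h_a(m) v_{j-m-n} + sum_{m>=0} cf n m v_{j-m-n} h_a(m).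
  Applied to a basis monomial w, the sums are finite; the truncation ranges below contain
  all non-vanishing terms (v_k w = 0 for k >= wt v + wt w, h_a(m) w = 0 for m > wt w).\<close>
primrec mode_list :: "(nat \<times> nat) list \<Rightarrow> int \<Rightarrow> mon \<Rightarrow> vec" where
  "mode_list [] j w = (if j = -1 then basis w else (\<lambda>_. 0))"
| "mode_list (p # us) j w =
     (\<lambda>w'. (\<Sum>m\<in>{- (int (sum_list (map snd (p # us))) + int (wt w) + \<bar>j\<bar> + 1) .. -1}.
              cf (snd p) m * heis (fst p) m (mode_list us (j - m - int (snd p)) w) w')
          + (\<Sum>m\<in>{0 .. int (wt w)}.
              cf (snd p) m * lin (mode_list us (j - m - int (snd p))) (heis_b (fst p) m w) w'))"

definition mode :: "mon \<Rightarrow> int \<Rightarrow> mon \<Rightarrow> vec" where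
  "mode u j w = mode_list (sorted_list_of_multiset u) j w"

definition vmode :: "vec \<Rightarrow> int \<Rightarrow> vec \<Rightarrow> vec" where
  "vmode u j v = (\<lambda>w'. \<Sum>p\<in>vsupp u. \<Sum>q\<in>vsupp v. u p * v q * mode p j q w')"

text \<open>H^+ : fixed points of the automorphism induced by h -> -h, i.e. span of monomials of
  even length.\<close>
definition Hplus :: "nat \<Rightarrow> vec set" where
  "Hplus ell = {x. finite (vsupp x) \<and> (\<forall>w\<in>vsupp x. mon_ok ell w \<and> even (size w))}"

definition homog :: "nat \<Rightarrow> vec \<Rightarrow> bool" where
  "homog d x \<longleftrightarrow> (\<forall>w\<in>vsupp x. wt w = d)"

definition circ :: "nat \<Rightarrow> vec \<Rightarrow> vec \<Rightarrow> vec" where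
  "circ d u v = (\<lambda>w'. \<Sum>i=0..d. of_nat (d choose i) * vmode u (int i - 2) v w')"

definition lspan :: "vec set \<Rightarrow> vec set" where
  "lspan S = {x. \<exists>F c. finite F \<and> F \<subseteq> S \<and> x = (\<lambda>w. \<Sum>y\<in>F. c y * y w)}"

definition O_Hplus :: "nat \<Rightarrow> vec set" where
  "O_Hplus ell = lspan {circ d u v | d u v. u \<in> Hplus ell \<and> homog d u \<and> v \<in> Hplus ell}"

definition zhu_eq :: "nat \<Rightarrow> vec \<Rightarrow> vec \<Rightarrow> bool" where
  "zhu_eq ell x y \<longleftrightarrow> (\<lambda>w. x w - y w) \<in> O_Hplus ell"

definition S :: "nat \<Rightarrow> nat \<Rightarrow> nat \<Rightarrow> vec" where
  "S a b m = basis {#(a, 1), (b, m)#}"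

definition lc :: "(complex \<times> vec) list \<Rightarrow> vec" where
  "lc xs = (\<lambda>w. \<Sum>(c, x)\<leftarrow>xs. c * x w)"

definition Eu :: "nat \<Rightarrow> nat \<Rightarrow> vec" where
  "Eu a b = lc [(5, S a b 2), (25, S a b 3), (36, S a b 4), (16, S a b 5)]"

definition Eu_bar :: "nat \<Rightarrow> nat \<Rightarrow> vec" where
  "Eu_bar b a = lc [(1, S a b 1), (14, S a b 2), (41, S a b 3), (44, S a b 4), (16, S a b 5)]"

definition Et :: "nat \<Rightarrow> nat \<Rightarrow> vec" where
  "Et a b = lc [(-16 * 3, S a b 2), (-16 * 14, S a b 3), (-16 * 19, S a b 4), (-16 * 8, S a b 5)]"

definition Et_bar :: "nat \<Rightarrow> nat \<Rightarrow> vec" where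
  "Et_bar b a = lc [(-16 * 5, S a b 2), (-16 * 18, S a b 3), (-16 * 21, S a b 4), (-16 * 8, S a b 5)]"

definition Lam :: "nat \<Rightarrow> nat \<Rightarrow> vec" where
  "Lam a b = lc [(45, S a b 2), (190, S a b 3), (240, S a b 4), (96, S a b 5)]"

end

theory Submission imports Defs begin

text \<open>
  For a homogeneous u the element u o 1 = u_{-2} 1 + (wt u) u = L(-1) u + (wt u) u
  lies in O(H+). Taking u = h_a(-n) h_b(-m) 1 gives the relations
  (n+m) S_ab(n,m) + n S_ab(n+1,m) + m S_ab(n,m+1) = 0 in A(H+),
  and each of the three identities is an explicit rational combination of these relations
  with n + m \<le> 5.
\<close>

lemma vsupp_basis [simp]: "vsupp (basis w) = {w}"
  by (auto simp: vsupp_def basis_def)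

lemma lin_zero [simp]: "lin f (\<lambda>_. 0) = (\<lambda>_. 0)"
  by (simp add: lin_def vsupp_def)

lemma lin_scaled_basis: "lin f (\<lambda>w'. c * basis w w') = (\<lambda>w'. c * f w w')"
proof (cases "c = 0")
  case False
  then have "vsupp (\<lambda>w'. c * basis w w') = {w}"
    by (auto simp: vsupp_def basis_def)
  with False show ?thesis
    by (simp add: lin_def basis_def)
qed (simp add: lin_def vsupp_def)

lemma heis_creation_scaled_basis:
  assumes "k < 0"
  shows "heis x k (\<lambda>w'. if P then c * basis w w' else 0) =
         (\<lambda>w'. if P then c * basis (add_mset (x, nat (-k)) w) w' else 0)"
  using assms by (cases P) (simp_all add: heis_def heis_b_def lin_scaled_basis)

lemma cf_neg: "k \<le> -1 \<Longrightarrow> cf n k = of_nat (nat (-k-1) choose (n-1))"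
proof -
  assume "k \<le> -1"
  then have "(of_int (- k - 1) :: complex) = of_nat (nat (-k-1))"
    by simp
  then show ?thesis
    unfolding cf_def by (simp add: binomial_gbinomial)
qed

lemma cf_diag: "n \<ge> 1 \<Longrightarrow> cf n (- int n) = 1"
  by (simp add: cf_neg nat_diff_distrib)

lemma cf_subdiag: "n \<ge> 1 \<Longrightarrow> cf n (- int n - 1) = of_nat n"
  using binomial_symmetric[of "n-1" n] by (simp add: cf_neg)

lemma cf_mult_cf_eq_0:
  assumes "n \<ge> 1" "m \<ge> 1" "k \<le> -1" "j - k - int n - int m + 1 \<le> -1"
    and "k \<notin> {j - int n + 1 .. - int n}"
  shows "cf n k * cf m (j - k - int n - int m + 1) = 0"
proof (cases "k > - int n")
  case True
  then have "nat (-k-1) < n - 1"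
    using assms by auto
  with assms show ?thesis
    by (simp add: cf_neg binomial_eq_0)
next
  case False
  then have "nat (-(j - k - int n - int m + 1) - 1) < m - 1"
    using assms by auto
  with assms show ?thesis
    by (simp add: cf_neg[of "j - k - int n - int m + 1"] binomial_eq_0)
qed

text \<open>On the vacuum all annihilation modes vanish.\<close>

lemma mode_list_Cons_vacuum:
  "mode_list ((x, n) # us) j {#} =
    (\<lambda>w'. \<Sum>k\<in>{- (int (sum_list (map snd ((x, n) # us))) + \<bar>j\<bar> + 1) .. -1}.
            cf n k * heis x k (mode_list us (j - k - int n) {#}) w')"
  by (simp add: wt_def heis_b_def)

lemma mode_list_single_vacuum:
  "mode_list [(y, m)] i {#} =
    (\<lambda>w'. if i - int m + 1 \<le> -1
          then cf m (i - int m + 1) * basis {#(y, nat (int m - i - 1))#} w' else 0)"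
proof
  fix w'
  let ?K = "{- (int (sum_list (map snd [(y, m)])) + \<bar>i\<bar> + 1) .. -1}"
  have "mode_list [(y, m)] i {#} w' =
      (\<Sum>k\<in>?K. if k = i - int m + 1 then cf m k * basis {#(y, nat (-k))#} w' else 0)"
    unfolding mode_list_Cons_vacuum
  proof (intro sum.cong)
    fix k assume "k \<in> ?K"
    then have "k < 0" by simp
    have "mode_list [] (i - k - int m) {#} =
        (\<lambda>w'. if k = i - int m + 1 then 1 * basis {#} w' else 0)"
      by auto
    then show "cf m k * heis y k (mode_list [] (i - k - int m) {#}) w' =
        (if k = i - int m + 1 then cf m k * basis {#(y, nat (-k))#} w' else 0)"
      by (simp add: heis_creation_scaled_basis[OF \<open>k < 0\<close>])
  qed simp
  also have "\<dots> = (if i - int m + 1 \<le> -1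
                   then cf m (i - int m + 1) * basis {#(y, nat (int m - i - 1))#} w' else 0)"
    by (auto simp: abs_if)
  finally show "mode_list [(y, m)] i {#} w' = \<dots>" .
qed

lemma mode_list_pair_vacuum:
  assumes "n \<ge> 1" "m \<ge> 1"
  shows "mode_list [(x, n), (y, m)] j {#} =
    (\<lambda>w'. \<Sum>k\<in>{j - int n + 1 .. - int n}.
       cf n k * cf m (j - k - int n - int m + 1) *
         basis (add_mset (x, nat (-k)) {#(y, nat (int m - (j - k - int n) - 1))#}) w')"
proof
  fix w'
  let ?K = "{- (int (sum_list (map snd [(x, n), (y, m)])) + \<bar>j\<bar> + 1) .. -1}"
  let ?g = "\<lambda>k. cf n k * cf m (j - k - int n - int m + 1) *
       basis (add_mset (x, nat (-k)) {#(y, nat (int m - (j - k - int n) - 1))#}) w'"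
  have "mode_list [(x, n), (y, m)] j {#} w' =
      (\<Sum>k\<in>?K. if j - k - int n - int m + 1 \<le> -1 then ?g k else 0)"
    unfolding mode_list_Cons_vacuum[of x n "[(y, m)]"]
  proof (intro sum.cong)
    fix k assume "k \<in> ?K"
    then have "k < 0" by simp
    then show "cf n k * heis x k (mode_list [(y, m)] (j - k - int n) {#}) w' =
        (if j - k - int n - int m + 1 \<le> -1 then ?g k else 0)"
      unfolding mode_list_single_vacuum heis_creation_scaled_basis[OF \<open>k < 0\<close>]
      by (simp add: algebra_simps)
  qed simp
  also have "\<dots> = (\<Sum>k\<in>{j - int n + 1 .. - int n}.
                    if j - k - int n - int m + 1 \<le> -1 then ?g k else 0)"
    using assms cf_mult_cf_eq_0[OF assms]
    by (intro sum.mono_neutral_right) auto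
  also have "\<dots> = (\<Sum>k\<in>{j - int n + 1 .. - int n}. ?g k)"
    using assms by (intro sum.cong) auto
  finally show "mode_list [(x, n), (y, m)] j {#} w' = \<dots>" .
qed

lemma mode_list_pair_vacuum_minus_1:
  assumes "n \<ge> 1" "m \<ge> 1"
  shows "mode_list [(x, n), (y, m)] (-1) {#} = basis {#(x, n), (y, m)#}"
proof -
  have "{-1 - int n + 1 .. - int n} = {- int n}" by auto
  with assms show ?thesis
    by (simp add: mode_list_pair_vacuum cf_diag algebra_simps del: mode_list.simps)
qed

lemma mode_list_pair_vacuum_minus_2:
  assumes "n \<ge> 1" "m \<ge> 1"
  shows "mode_list [(x, n), (y, m)] (-2) {#} =
    (\<lambda>w'. of_nat n * basis {#(x, Suc n), (y, m)#} w' + of_nat m * basis {#(x, n), (y, Suc m)#} w')"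
proof -
  have "{-2 - int n + 1 .. - int n} = {- int n - 1, - int n}" by auto
  moreover have "cf m (- 1 - int m) = of_nat m"
    using cf_subdiag[OF assms(2)] by (simp only: diff_conv_add_uminus add.commute)
  ultimately show ?thesis using assms
    by (simp add: mode_list_pair_vacuum cf_diag cf_subdiag algebra_simps nat_add_distrib
        del: mode_list.simps)
qed

lemma mode_list_pair_vacuum_nonneg:
  assumes "n \<ge> 1" "m \<ge> 1" "j \<ge> 0"
  shows "mode_list [(x, n), (y, m)] j {#} = (\<lambda>_. 0)"
proof -
  have "{j - int n + 1 .. - int n} = {}" using assms by auto
  with assms show ?thesis
    by (simp add: mode_list_pair_vacuum del: mode_list.simps)
qed

lemma mode_pair_vacuum:
  assumes "n \<ge> 1" "m \<ge> 1"
  shows mode_pair_vacuum_minus_1: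
      "mode {#(a, n), (b, m)#} (-1) {#} = basis {#(a, n), (b, m)#}"
    and mode_pair_vacuum_minus_2: "mode {#(a, n), (b, m)#} (-2) {#} =
      (\<lambda>w'. of_nat n * basis {#(a, Suc n), (b, m)#} w' + of_nat m * basis {#(a, n), (b, Suc m)#} w')"
    and mode_pair_vacuum_nonneg: "j \<ge> 0 \<Longrightarrow> mode {#(a, n), (b, m)#} j {#} = (\<lambda>_. 0)"
  using assms unfolding mode_def
  by (simp_all add: mode_list_pair_vacuum_minus_1 mode_list_pair_vacuum_minus_2
      mode_list_pair_vacuum_nonneg add_mset_commute add.commute del: mode_list.simps)

definition Sab :: "nat \<Rightarrow> nat \<Rightarrow> nat \<Rightarrow> nat \<Rightarrow> vec" where
  "Sab a b n m = basis {#(a, n), (b, m)#}"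

text \<open>(wt u) u + L(-1) u for u = Sab a b n m.\<close>

definition zhu_rel :: "nat \<Rightarrow> nat \<Rightarrow> nat \<Rightarrow> nat \<Rightarrow> vec" where
  "zhu_rel a b n m = (\<lambda>w. of_nat (n + m) * Sab a b n m w
     + of_nat n * Sab a b (n + 1) m w + of_nat m * Sab a b n (m + 1) w)"

lemma circ_Sab_vacuum:
  assumes "n \<ge> 1" "m \<ge> 1"
  shows "circ (n + m) (Sab a b n m) (basis {#}) = zhu_rel a b n m"
proof
  fix w
  let ?f = "\<lambda>i. of_nat ((n + m) choose i) * mode {#(a, n), (b, m)#} (int i - 2) {#} w"
  have "vmode (basis u) j (basis v) = mode u j v" for u j v
    unfolding vmode_def vsupp_basis by (simp add: basis_def)
  then have "circ (n + m) (Sab a b n m) (basis {#}) w = (\<Sum>i = 0..n + m. ?f i)"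
    by (simp add: circ_def Sab_def)
  also have "\<dots> = (\<Sum>i\<in>{0, 1}. ?f i)"
    using assms mode_pair_vacuum_nonneg[OF assms]
    by (intro sum.mono_neutral_right) auto
  also have "\<dots> = zhu_rel a b n m w"
    using assms
    by (simp add: mode_pair_vacuum_minus_1 mode_pair_vacuum_minus_2 zhu_rel_def Sab_def
        algebra_simps)
  finally show "circ (n + m) (Sab a b n m) (basis {#}) w = zhu_rel a b n m w" .
qed

lemma lspan_generator: "y \<in> G \<Longrightarrow> y \<in> lspan G"
  unfolding lspan_def by (intro CollectI exI[of _ "{y}"] exI[of _ "\<lambda>_. 1"]) simp

lemma lspan_zero: "(\<lambda>_. 0) \<in> lspan G"
  unfolding lspan_def by (intro CollectI exI[of _ "{}"] exI[of _ "\<lambda>_. 1"]) simp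

lemma lspan_scale:
  assumes "x \<in> lspan G"
  shows "(\<lambda>w. c * x w) \<in> lspan G"
proof -
  obtain F d where "finite F" "F \<subseteq> G" "x = (\<lambda>w. \<Sum>y\<in>F. d y * y w)"
    using assms unfolding lspan_def by blast
  then show ?thesis
    unfolding lspan_def
    by (intro CollectI exI[of _ F] exI[of _ "\<lambda>y. c * d y"])
      (simp add: sum_distrib_left mult.assoc)
qed

lemma lspan_add:
  assumes "x \<in> lspan G" "z \<in> lspan G"
  shows "(\<lambda>w. x w + z w) \<in> lspan G"
proof -
  obtain F d F' d' where F: "finite F" "F \<subseteq> G" "x = (\<lambda>w. \<Sum>y\<in>F. d y * y w)"
    and F': "finite F'" "F' \<subseteq> G" "z = (\<lambda>w. \<Sum>y\<in>F'. d' y * y w)"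
    using assms unfolding lspan_def by blast
  define e where "e y = (if y \<in> F then d y else 0) + (if y \<in> F' then d' y else 0)" for y
  have "x w + z w = (\<Sum>y\<in>F \<union> F'. e y * y w)" for w
  proof -
    have "(\<Sum>y\<in>F \<union> F'. e y * y w) = (\<Sum>y\<in>F \<union> F'. if y \<in> F then d y * y w else 0)
        + (\<Sum>y\<in>F \<union> F'. if y \<in> F' then d' y * y w else 0)"
      unfolding sum.distrib[symmetric] e_def by (intro sum.cong) (auto simp: distrib_right)
    also have "\<dots> = x w + z w"
      using F F' by (simp add: sum.inter_restrict[symmetric] Int_absorb1 Int_absorb2)
    finally show ?thesis ..
  qed
  with F F' show ?thesis
    unfolding lspan_def by blast
qed

lemma lspan_sum_list:
  "\<forall>(c, y)\<in>set L. y \<in> lspan G \<Longrightarrow> (\<lambda>w. \<Sum>(c, y)\<leftarrow>L. c * y w) \<in> lspan G"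
proof (induction L)
  case Nil
  then show ?case using lspan_zero by simp
next
  case (Cons p L)
  obtain c y where p: "p = (c, y)" by force
  with Cons.prems have "(\<lambda>w. c * y w) \<in> lspan G"
    by (auto intro: lspan_scale)
  with Cons have "(\<lambda>w. c * y w + (\<Sum>(c, y)\<leftarrow>L. c * y w)) \<in> lspan G"
    by (auto intro: lspan_add)
  with p show ?case by simp
qed

lemma zhu_rel_in_O_Hplus:
  assumes "a \<in> {1..ell}" "b \<in> {1..ell}" "n \<ge> 1" "m \<ge> 1"
  shows "zhu_rel a b n m \<in> O_Hplus ell"
proof -
  have "Sab a b n m \<in> Hplus ell" "basis {#} \<in> Hplus ell"
    using assms by (auto simp: Hplus_def mon_ok_def Sab_def)
  moreover have "homog (n + m) (Sab a b n m)"
    by (simp add: homog_def wt_def Sab_def)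
  ultimately show ?thesis
    unfolding O_Hplus_def circ_Sab_vacuum[OF assms(3,4), symmetric]
    by (blast intro: lspan_generator)
qed

lemma zhu_eq_by_zhu_rels:
  assumes "a \<in> {1..ell}" "b \<in> {1..ell}"
    and "\<forall>(c, n, m)\<in>set L. n \<ge> 1 \<and> m \<ge> 1"
    and "\<And>w. x w - z w = (\<Sum>(c, n, m)\<leftarrow>L. c * zhu_rel a b n m w)"
  shows "zhu_eq ell x z"
proof -
  let ?L = "map (\<lambda>(c, n, m). (c, zhu_rel a b n m)) L"
  have "(\<lambda>w. \<Sum>(c, y)\<leftarrow>?L. c * y w) \<in> O_Hplus ell"
    unfolding O_Hplus_def
    using assms(3) zhu_rel_in_O_Hplus[OF assms(1,2), unfolded O_Hplus_def]
    by (intro lspan_sum_list) auto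
  moreover have "(\<Sum>(c, y)\<leftarrow>?L. c * y w) = (\<Sum>(c, n, m)\<leftarrow>L. c * zhu_rel a b n m w)" for w
    by (induction L) auto
  ultimately show ?thesis
    unfolding zhu_eq_def using assms(4) by simp
qed

lemma S_eq_Sab: "S a b m = Sab a b 1 m"
  by (simp add: S_def Sab_def)

lemma S_swap_eq_Sab: "S b a m = Sab a b m 1"
  by (simp add: S_def Sab_def add_mset_commute)

lemma zhu_eq_Eu_Eu_bar:
  assumes "a \<in> {1..ell}" "b \<in> {1..ell}"
  shows "zhu_eq ell (Eu b a) (Eu_bar b a)"
  by (rule zhu_eq_by_zhu_rels[OF assms, where L = "[(-1/2, 1, 1), (-9/2, 1, 2), (-8, 1, 3),
        (-4, 1, 4), (11/6, 2, 1), (2/3, 2, 2), (4/3, 2, 3), (16/3, 3, 1), (-4/3, 3, 2), (4, 4, 1)]"])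
     (simp_all add: Eu_def Eu_bar_def lc_def zhu_rel_def
       S_eq_Sab[where a = a and b = b] S_swap_eq_Sab[where a = a and b = b] field_simps
       del: One_nat_def)

lemma zhu_eq_Et_Et_bar:
  assumes "a \<in> {1..ell}" "b \<in> {1..ell}"
  shows "zhu_eq ell (Et b a) (Et_bar b a)"
  by (rule zhu_eq_by_zhu_rels[OF assms, where L = "[(80/3, 1, 2), (176/3, 1, 3), (32, 1, 4),
        (-16, 2, 1), (-8/3, 2, 2), (-32/3, 2, 3), (-48, 3, 1), (32/3, 3, 2), (-32, 4, 1)]"])
     (simp_all add: Et_def Et_bar_def lc_def zhu_rel_def
       S_eq_Sab[where a = a and b = b] S_swap_eq_Sab[where a = a and b = b] field_simps
       del: One_nat_def)

lemma zhu_eq_Lam_Lam_swap: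
  assumes "a \<in> {1..ell}" "b \<in> {1..ell}"
  shows "zhu_eq ell (Lam a b) (Lam b a)"
  by (rule zhu_eq_by_zhu_rels[OF assms, where L = "[(15, 1, 2), (40, 1, 3), (24, 1, 4),
        (-15, 2, 1), (-8, 2, 3), (-40, 3, 1), (8, 3, 2), (-24, 4, 1)]"])
     (simp_all add: Lam_def lc_def zhu_rel_def
       S_eq_Sab[where a = a and b = b] S_swap_eq_Sab[where a = a and b = b] del: One_nat_def)

theorem lemma5p1p1:
  fixes ell a b :: nat
  assumes "a \<in> {1..ell}" and "b \<in> {1..ell}" and "a \<noteq> b"
  shows "zhu_eq ell (Eu b a) (Eu_bar b a)
       \<and> zhu_eq ell (Et b a) (Et_bar b a)
       \<and> zhu_eq ell (Lam a b) (Lam b a)"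
  using zhu_eq_Eu_Eu_bar[OF assms(1,2)] zhu_eq_Et_Et_bar[OF assms(1,2)]
    zhu_eq_Lam_Lam_swap[OF assms(1,2)]
  by blast

end
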